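(* Let $d\ge 1$ and $n,k\ge 0$ be integers. Let $\mathcal{L}_{\leq d}(n,k)$ be the set of lonesum $0$-$1$ matrices with $n$ rows and $k$ columns that have no all-zero row and no all-zero column, and in which at most $d$ columns are of the same type and at most $d$ rows are of the same type. Then \[ |\mathcal{L}_{\leq d}(n,k)|=\sum_{m=0}^{\min(n,k)} m!\,S_{\leq d}(n,m)\; m!\,S_{\leq d}(k,m). \]
   Context: A $0$-$1$ matrix is lonesum if it is uniquely determined by its vector of row sums and its vector of column sums; equivalently, it contains no $2\times 2$ submatrix (rows $i<i'$, columns $j<j'$) equal to $\begin{pmatrix}1&0\\0&1\end{pmatrix}$ or $\begin{pmatrix}0&1\\1&0\end{pmatrix}$. The type of a column (resp. row) is the column (resp. row) vector itself; two columns have the same type iff they are identical vectors. $S_{\leq d}(n,m)$ denotes the restricted Stirling number of the second kind: the number of partitions of an $n$-element set into $m$ non-empty blocks each of size at most $d$ (with $S_{\le d}(0,0)=1$). *)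

theory Defs
  imports "HOL-Library.FuncSet" "HOL-Library.Disjoint_Sets"
begin

definition zo_matrices :: "nat \<Rightarrow> nat \<Rightarrow> (nat \<Rightarrow> nat \<Rightarrow> nat) set" where
  "zo_matrices n k = ({0..<n} \<rightarrow>\<^sub>E ({0..<k} \<rightarrow>\<^sub>E {0, 1}))"

definition row_sums :: "nat \<Rightarrow> (nat \<Rightarrow> nat \<Rightarrow> nat) \<Rightarrow> nat \<Rightarrow> nat" where
  "row_sums k M = (\<lambda>i. \<Sum>j<k. M i j)"

definition col_sums :: "nat \<Rightarrow> (nat \<Rightarrow> nat \<Rightarrow> nat) \<Rightarrow> nat \<Rightarrow> nat" where
  "col_sums n M = (\<lambda>j. \<Sum>i<n. M i j)"

definition lonesum :: "nat \<Rightarrow> nat \<Rightarrow> (nat \<Rightarrow> nat \<Rightarrow> nat) \<Rightarrow> bool" where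
  "lonesum n k M \<longleftrightarrow>
     (\<forall>N \<in> zo_matrices n k.
        (\<forall>i<n. row_sums k N i = row_sums k M i) \<and> (\<forall>j<k. col_sums n N j = col_sums n M j)
        \<longrightarrow> N = M)"

definition same_col_type :: "nat \<Rightarrow> (nat \<Rightarrow> nat \<Rightarrow> nat) \<Rightarrow> nat \<Rightarrow> nat \<Rightarrow> bool" where
  "same_col_type n M j j' \<longleftrightarrow> (\<forall>i<n. M i j = M i j')"

definition same_row_type :: "nat \<Rightarrow> (nat \<Rightarrow> nat \<Rightarrow> nat) \<Rightarrow> nat \<Rightarrow> nat \<Rightarrow> bool" where
  "same_row_type k M i i' \<longleftrightarrow> (\<forall>j<k. M i j = M i' j)"

definition L_le :: "nat \<Rightarrow> nat \<Rightarrow> nat \<Rightarrow> (nat \<Rightarrow> nat \<Rightarrow> nat) set" where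
  "L_le d n k = {M \<in> zo_matrices n k.
      lonesum n k M \<and>
      (\<forall>i<n. \<exists>j<k. M i j \<noteq> 0) \<and>
      (\<forall>j<k. \<exists>i<n. M i j \<noteq> 0) \<and>
      (\<forall>j<k. card {j'. j' < k \<and> same_col_type n M j j'} \<le> d) \<and>
      (\<forall>i<n. card {i'. i' < n \<and> same_row_type k M i i'} \<le> d)}"

definition stirling_le :: "nat \<Rightarrow> nat \<Rightarrow> nat \<Rightarrow> nat" where
  "stirling_le d n m = card {P. partition_on {0..<n} P \<and> card P = m \<and> (\<forall>B\<in>P. card B \<le> d)}"

end

theory Submission
  imports Defs
begin

text \<open>A lonesum matrix contains no 2 x 2 interchange, so its row supports form a chain under
  inclusion. If moreover no row and no column vanishes, ranking each row by the number of
  distinct row supports strictly inside its own, and each column by the number of row supports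
  missing it, gives surjections r and c onto the same set {0..<m} with M i j = 1 exactly when
  c j \<le> r i. Conversely every such staircase matrix is lonesum, by a weighted-sum argument.
  Two rows (columns) have the same type iff they have the same r-value (c-value), so the
  matrices in question correspond to pairs of surjections onto {0..<m} whose fibres have
  at most d elements. Recording the fibres of such a surjection from {0..<n}, in the order of
  their values, gives a partition of {0..<n} into m blocks of size at most d together with an
  ordering of the blocks, whence there are m! S_{\<le>d}(n, m) such surjections.\<close>

section \<open>Surjections with bounded fibres\<close>

definition surjections :: "'a set \<Rightarrow> 'b set \<Rightarrow> ('a \<Rightarrow> 'b) set" where
  "surjections A B = {f \<in> A \<rightarrow>\<^sub>E B. f ` A = B}"

definition bounded_surjections :: "nat \<Rightarrow> 'a set \<Rightarrow> 'b set \<Rightarrow> ('a \<Rightarrow> 'b) set" where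
  "bounded_surjections d A B = {f \<in> surjections A B. \<forall>b\<in>B. card {a \<in> A. f a = b} \<le> d}"

definition bounded_partitions :: "nat \<Rightarrow> 'a set \<Rightarrow> nat \<Rightarrow> 'a set set set" where
  "bounded_partitions d A m = {P. partition_on A P \<and> card P = m \<and> (\<forall>X\<in>P. card X \<le> d)}"

lemma card_le_if_surjection: "f \<in> surjections A B \<Longrightarrow> finite A \<Longrightarrow> card B \<le> card A"
  unfolding surjections_def by (auto simp: card_image_le)

definition fiber_enumeration :: "'a set \<Rightarrow> 'b set \<Rightarrow> ('a \<Rightarrow> 'b) \<Rightarrow> 'b \<Rightarrow> 'a set" where
  "fiber_enumeration A B f = (\<lambda>b\<in>B. {a \<in> A. f a = b})"

definition block_index :: "'a set \<Rightarrow> 'b set \<Rightarrow> ('b \<Rightarrow> 'a set) \<Rightarrow> 'a \<Rightarrow> 'b" where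
  "block_index A B e = (\<lambda>a\<in>A. THE b. b \<in> B \<and> a \<in> e b)"

lemma card_injections_eq_fact:
  assumes "finite A" "finite B" "card A = card B"
  shows "card {e \<in> A \<rightarrow>\<^sub>E B. inj_on e A} = fact (card A)"
  using card_inj_on_subset_funcset[of A B A] assms by (simp add: fact_prod_rev)

lemma block_index_fiber_enumeration:
  assumes "f \<in> A \<rightarrow>\<^sub>E B"
  shows "block_index A B (fiber_enumeration A B f) = f"
proof -
  have "(THE b. b \<in> B \<and> a \<in> fiber_enumeration A B f b) = f a" if "a \<in> A" for a
    using assms that by (intro the_equality) (auto simp: fiber_enumeration_def)
  then show ?thesis
    using assms by (auto simp: block_index_def PiE_def extensional_def)
qed

lemma block_index_eq_iff:
  assumes P: "partition_on A P" and e: "bij_betw e B P" and a: "a \<in> A" and b: "b \<in> B"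
  shows "block_index A B e a = b \<longleftrightarrow> a \<in> e b"
proof -
  have unique: "b' = b''" if "b' \<in> B" "b'' \<in> B" "a \<in> e b'" "a \<in> e b''" for b' b''
  proof (rule ccontr)
    assume "b' \<noteq> b''"
    then have "e b' \<noteq> e b''" using e that(1,2) by (auto simp: bij_betw_def inj_on_def)
    moreover have "e b' \<in> P" "e b'' \<in> P" using e that(1,2) by (auto simp: bij_betw_def)
    ultimately show False using partition_onD2[OF P] that(3,4) by (auto dest: disjointD)
  qed
  obtain b' where b': "b' \<in> B" "a \<in> e b'"
    using partition_onD1[OF P] a e by (auto simp: bij_betw_def)
  have "(THE b'. b' \<in> B \<and> a \<in> e b') = b'"
    using b' unique by blast
  then show ?thesis using a b b' unique by (auto simp: block_index_def)
qed

lemma fiber_enumeration_block_index: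
  assumes P: "partition_on A P" and e: "e \<in> B \<rightarrow>\<^sub>E P" "bij_betw e B P"
  shows "fiber_enumeration A B (block_index A B e) = e"
proof
  fix b
  show "fiber_enumeration A B (block_index A B e) b = e b"
  proof (cases "b \<in> B")
    case True
    have "e b \<subseteq> A" using P e(1) True by (auto simp: partition_on_def)
    then show ?thesis
      using block_index_eq_iff[OF P e(2) _ True] True by (auto simp: fiber_enumeration_def)
  qed (use e(1) in \<open>auto simp: fiber_enumeration_def\<close>)
qed

lemma fiber_enumeration_surjection:
  assumes f: "f \<in> surjections A B"
  shows "partition_on A (fiber_enumeration A B f ` B)"
    and "inj_on (fiber_enumeration A B f) B"
proof -
  have nonempty: "fiber_enumeration A B f b \<noteq> {}" if "b \<in> B" for b
    using f that by (force simp: surjections_def fiber_enumeration_def)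
  show "inj_on (fiber_enumeration A B f) B"
  proof (rule inj_onI)
    fix b b' assume "b \<in> B" "b' \<in> B" "fiber_enumeration A B f b = fiber_enumeration A B f b'"
    then show "b = b'" using nonempty by (force simp: fiber_enumeration_def)
  qed
  show "partition_on A (fiber_enumeration A B f ` B)"
  proof (rule partition_onI)
    show "\<Union> (fiber_enumeration A B f ` B) = A"
      using f by (auto simp: surjections_def fiber_enumeration_def)
    show "disjnt X Y" if "X \<in> fiber_enumeration A B f ` B" "Y \<in> fiber_enumeration A B f ` B" "X \<noteq> Y"
      for X Y using that by (auto simp: disjnt_def fiber_enumeration_def)
    show "{} \<notin> fiber_enumeration A B f ` B" using nonempty by auto
  qed
qed

lemma fiber_enumeration_bounded_surjection:
  assumes f: "f \<in> bounded_surjections d A B"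
  shows "fiber_enumeration A B f ` B \<in> bounded_partitions d A (card B)"
    and "fiber_enumeration A B f \<in> B \<rightarrow>\<^sub>E fiber_enumeration A B f ` B"
    and "inj_on (fiber_enumeration A B f) B"
proof -
  have surj: "f \<in> surjections A B" using f by (simp add: bounded_surjections_def)
  show "fiber_enumeration A B f ` B \<in> bounded_partitions d A (card B)"
    using f fiber_enumeration_surjection[OF surj]
    by (auto simp: bounded_partitions_def bounded_surjections_def fiber_enumeration_def card_image)
  show "fiber_enumeration A B f \<in> B \<rightarrow>\<^sub>E fiber_enumeration A B f ` B"
    by (auto simp: fiber_enumeration_def)
  show "inj_on (fiber_enumeration A B f) B"
    using fiber_enumeration_surjection(2)[OF surj] .
qed

lemma bij_betw_if_inj_into_bounded_partition:
  assumes "finite A" "finite B" and P: "P \<in> bounded_partitions d A (card B)"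
    and e: "e \<in> B \<rightarrow>\<^sub>E P" "inj_on e B"
  shows "bij_betw e B P"
proof -
  have "finite P"
    using P assms(1) finite_elements by (auto simp: bounded_partitions_def)
  then have "e ` B = P"
    using P e by (intro card_subset_eq) (auto simp: bounded_partitions_def card_image)
  then show ?thesis using e(2) by (simp add: bij_betw_def)
qed

lemma block_index_bounded_surjection:
  assumes P: "partition_on A P" "\<forall>X\<in>P. card X \<le> d"
    and e: "e \<in> B \<rightarrow>\<^sub>E P" "bij_betw e B P"
  shows "block_index A B e \<in> bounded_surjections d A B"
proof -
  let ?f = "block_index A B e"
  have fiber: "{a \<in> A. ?f a = b} = e b" if "b \<in> B" for b
  proof -
    have "fiber_enumeration A B ?f b = e b"
      using fiber_enumeration_block_index[OF P(1) e] by simp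
    then show ?thesis using that by (simp add: fiber_enumeration_def)
  qed
  have "?f \<in> A \<rightarrow>\<^sub>E B"
  proof
    fix a assume a: "a \<in> A"
    then obtain b where b: "b \<in> B" "a \<in> e b"
      using partition_onD1[OF P(1)] e(2) by (auto simp: bij_betw_def)
    then show "?f a \<in> B" using block_index_eq_iff[OF P(1) e(2) a b(1)] by simp
  qed (simp add: block_index_def)
  moreover have "B \<subseteq> ?f ` A"
  proof
    fix b assume b: "b \<in> B"
    then obtain a where "a \<in> e b"
      using partition_onD3[OF P(1)] PiE_mem[OF e(1) b] by (metis equals0I)
    then show "b \<in> ?f ` A" using fiber[OF b] by (metis (mono_tags, lifting) image_eqI mem_Collect_eq)
  qed
  moreover have "\<forall>b\<in>B. card {a \<in> A. ?f a = b} \<le> d"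
    using fiber P(2) e(1) by auto
  ultimately show ?thesis
    by (auto simp: bounded_surjections_def surjections_def)
qed

lemma bij_betw_bounded_surjections_partitions:
  assumes A: "finite A" and B: "finite B"
  shows "bij_betw (\<lambda>f. (fiber_enumeration A B f ` B, fiber_enumeration A B f))
    (bounded_surjections d A B)
    (SIGMA P:bounded_partitions d A (card B). {e \<in> B \<rightarrow>\<^sub>E P. inj_on e B})"
    (is "bij_betw ?fibers ?Surj ?Enum")
proof (rule bij_betw_byWitness[where f' = "\<lambda>(P, e). block_index A B e"])
  show "\<forall>f\<in>?Surj. (\<lambda>(P, e). block_index A B e) (?fibers f) = f"
    by (auto simp: bounded_surjections_def surjections_def block_index_fiber_enumeration)
  show "\<forall>Pe\<in>?Enum. ?fibers ((\<lambda>(P, e). block_index A B e) Pe) = Pe"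
  proof
    fix Pe assume "Pe \<in> ?Enum"
    then obtain P e where Pe: "Pe = (P, e)" and P: "P \<in> bounded_partitions d A (card B)"
      and e: "e \<in> B \<rightarrow>\<^sub>E P" "inj_on e B" by blast
    have bij: "bij_betw e B P" using bij_betw_if_inj_into_bounded_partition[OF A B P e] .
    moreover have "partition_on A P" using P by (simp add: bounded_partitions_def)
    ultimately have "fiber_enumeration A B (block_index A B e) = e"
      using fiber_enumeration_block_index e(1) by blast
    then show "?fibers ((\<lambda>(P, e). block_index A B e) Pe) = Pe"
      using Pe bij by (simp add: bij_betw_def)
  qed
  show "?fibers ` ?Surj \<subseteq> ?Enum"
    by (rule image_subsetI) (simp add: fiber_enumeration_bounded_surjection)
  show "(\<lambda>(P, e). block_index A B e) ` ?Enum \<subseteq> ?Surj"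
    using bij_betw_if_inj_into_bounded_partition[OF A B] block_index_bounded_surjection
    by (force simp: bounded_partitions_def)
qed

lemma card_bounded_surjections:
  assumes "finite A" "finite B"
  shows "card (bounded_surjections d A B) = fact (card B) * card (bounded_partitions d A (card B))"
proof -
  have "card (bounded_surjections d A B)
      = card (SIGMA P:bounded_partitions d A (card B). {e \<in> B \<rightarrow>\<^sub>E P. inj_on e B})"
    using bij_betw_bounded_surjections_partitions[OF assms] by (rule bij_betw_same_card)
  also have "\<dots> = (\<Sum>P\<in>bounded_partitions d A (card B). card {e \<in> B \<rightarrow>\<^sub>E P. inj_on e B})"
  proof (rule card_SigmaI)
    show "finite (bounded_partitions d A (card B))"
      using finitely_many_partition_on[OF assms(1)] by (auto simp: bounded_partitions_def)
    show "\<forall>P\<in>bounded_partitions d A (card B). finite {e \<in> B \<rightarrow>\<^sub>E P. inj_on e B}"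
    proof
      fix P assume "P \<in> bounded_partitions d A (card B)"
      then have "finite (B \<rightarrow>\<^sub>E P)"
        using assms finite_elements by (auto simp: bounded_partitions_def intro: finite_PiE)
      then show "finite {e \<in> B \<rightarrow>\<^sub>E P. inj_on e B}" by simp
    qed
  qed
  also have "\<dots> = (\<Sum>P\<in>bounded_partitions d A (card B). fact (card B))"
  proof (rule sum.cong)
    fix P assume "P \<in> bounded_partitions d A (card B)"
    then have "finite P" "card B = card P"
      using assms finite_elements by (auto simp: bounded_partitions_def)
    then show "card {e \<in> B \<rightarrow>\<^sub>E P. inj_on e B} = fact (card B)"
      by (intro card_injections_eq_fact assms(2))
  qed simp
  finally show ?thesis by simp
qed

lemma finite_bounded_surjections:
  "finite A \<Longrightarrow> finite B \<Longrightarrow> finite (bounded_surjections d A B)"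
  unfolding bounded_surjections_def surjections_def by (simp add: finite_PiE)


section \<open>Staircase matrices\<close>
lemma zo_matrices_entry: "M \<in> zo_matrices n k \<Longrightarrow> i < n \<Longrightarrow> j < k \<Longrightarrow> M i j = 0 \<or> M i j = 1"
  by (auto simp: zo_matrices_def PiE_def Pi_def)

lemma zo_matrices_eqI:
  assumes "M \<in> zo_matrices n k" "N \<in> zo_matrices n k"
    and "\<And>i j. i < n \<Longrightarrow> j < k \<Longrightarrow> M i j = N i j"
  shows "M = N"
proof -
  have M: "M \<in> {0..<n} \<rightarrow>\<^sub>E ({0..<k} \<rightarrow>\<^sub>E {0, 1})" and N: "N \<in> {0..<n} \<rightarrow>\<^sub>E ({0..<k} \<rightarrow>\<^sub>E {0, 1})"
    using assms(1,2) by (simp_all add: zo_matrices_def)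
  show ?thesis
  proof (rule PiE_ext[OF M N])
    fix i assume "i \<in> {0..<n}"
    then show "M i = N i"
      using PiE_mem[OF M] PiE_mem[OF N] by (intro PiE_ext[of _ "{0..<k}" "\<lambda>_. {0, 1}"]) (auto intro: assms(3))
  qed
qed

lemma double_sum_zero_margins_weighted:
  fixes D :: "nat \<Rightarrow> nat \<Rightarrow> 'a::comm_ring"
  assumes rows: "\<And>i. i < n \<Longrightarrow> (\<Sum>j<k. D i j) = 0"
    and cols: "\<And>j. j < k \<Longrightarrow> (\<Sum>i<n. D i j) = 0"
  shows "(\<Sum>i<n. \<Sum>j<k. D i j * (a i + b j)) = 0"
proof -
  have "(\<Sum>i<n. \<Sum>j<k. D i j * (a i + b j))
      = (\<Sum>i<n. a i * (\<Sum>j<k. D i j)) + (\<Sum>j<k. b j * (\<Sum>i<n. D i j))"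
    by (simp add: algebra_simps sum.distrib sum_distrib_left sum.swap[of _ "{..<k}"])
  also have "\<dots> = 0" using rows cols by simp
  finally show ?thesis .
qed

definition staircase :: "nat \<Rightarrow> nat \<Rightarrow> (nat \<Rightarrow> nat) \<Rightarrow> (nat \<Rightarrow> nat) \<Rightarrow> nat \<Rightarrow> nat \<Rightarrow> nat" where
  "staircase n k r c = (\<lambda>i\<in>{0..<n}. \<lambda>j\<in>{0..<k}. if c j \<le> r i then 1 else 0)"

lemma staircase_apply: "i < n \<Longrightarrow> j < k \<Longrightarrow> staircase n k r c i j = (if c j \<le> r i then 1 else 0)"
  by (simp add: staircase_def)

lemma staircase_in_zo_matrices: "staircase n k r c \<in> zo_matrices n k"
  by (auto simp: staircase_def zo_matrices_def)

lemma lonesum_staircase: "lonesum n k (staircase n k r c)"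
  unfolding lonesum_def
proof (intro ballI impI)
  let ?M = "staircase n k r c"
  fix N assume N: "N \<in> zo_matrices n k"
    and sums: "(\<forall>i<n. row_sums k N i = row_sums k ?M i) \<and> (\<forall>j<k. col_sums n N j = col_sums n ?M j)"
  define D where "D i j = int (?M i j) - int (N i j)" for i j
  \<comment> \<open>The weight is positive exactly where the staircase has a one, so every weighted entry of
    D is nonnegative, while equal line sums make the weighted total vanish.\<close>
  define w where "w i j = (2 * int (r i) + 1) + (- 2 * int (c j))" for i j
  have "(\<Sum>i<n. \<Sum>j<k. D i j * w i j) = 0"
    unfolding w_def
  proof (rule double_sum_zero_margins_weighted)
    show "(\<Sum>j<k. D i j) = 0" if "i < n" for i
      using sums that by (simp add: D_def row_sums_def sum_subtractf flip: of_nat_sum)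
    show "(\<Sum>i<n. D i j) = 0" if "j < k" for j
      using sums that by (simp add: D_def col_sums_def sum_subtractf flip: of_nat_sum)
  qed
  moreover have nonneg: "D i j * w i j \<ge> 0" if "i < n" "j < k" for i j
    using zo_matrices_entry[OF N that] that by (auto simp: D_def w_def staircase_apply)
  ultimately have "\<forall>(i, j)\<in>{..<n} \<times> {..<k}. D i j * w i j = 0"
    by (subst (asm) sum.cartesian_product, subst (asm) sum_nonneg_eq_0_iff) auto
  moreover have "w i j \<noteq> 0" for i j
    unfolding w_def by presburger
  ultimately have "N i j = ?M i j" if "i < n" "j < k" for i j
    using that by (fastforce simp: D_def)
  then show "N = ?M"
    by (intro zo_matrices_eqI[OF N staircase_in_zo_matrices])
qed

section \<open>Ranks in a finite chain of sets\<close>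

definition chain_rank :: "'a set set \<Rightarrow> 'a set \<Rightarrow> nat" where
  "chain_rank F X = card {Y \<in> F. Y \<subset> X}"

lemma chain_rank_less_card: "finite F \<Longrightarrow> X \<in> F \<Longrightarrow> chain_rank F X < card F"
  unfolding chain_rank_def by (rule psubset_card_mono) auto

lemma chain_rank_strict_mono:
  "finite F \<Longrightarrow> X \<in> F \<Longrightarrow> X \<subset> Y \<Longrightarrow> chain_rank F X < chain_rank F Y"
  unfolding chain_rank_def by (rule psubset_card_mono) auto

lemma bij_betw_chain_rank:
  assumes "finite F" "chain\<^sub>\<subseteq> F"
  shows "bij_betw (chain_rank F) F {0..<card F}"
proof -
  have "inj_on (chain_rank F) F"
  proof (rule inj_onI)
    fix X Y assume "X \<in> F" "Y \<in> F" "chain_rank F X = chain_rank F Y"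
    then show "X = Y"
      using assms chain_rank_strict_mono[OF assms(1)] unfolding chain_subset_def
      by (metis less_irrefl psubsetI)
  qed
  moreover have "chain_rank F ` F = {0..<card F}"
    using calculation chain_rank_less_card[OF assms(1)]
    by (intro card_subset_eq) (auto simp: card_image)
  ultimately show ?thesis by (simp add: bij_betw_def)
qed

lemma chain_new_point:
  assumes F: "finite F" "chain\<^sub>\<subseteq> F" and X: "X \<in> F" "X \<noteq> {}"
  obtains x where "x \<in> X" "{Y \<in> F. x \<notin> Y} = {Y \<in> F. Y \<subset> X}"
proof -
  let ?B = "{Y \<in> F. Y \<subset> X}"
  have "\<Union>?B \<subset> X"
  proof (cases "?B = {}")
    case False
    have "\<Union>?B \<in> ?B"
      using False F by (intro Union_in_chain) (auto simp: chain_subset_alt_def subset.chain_def)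
    then show ?thesis by simp
  qed (use X in auto)
  then obtain x where x: "x \<in> X" "x \<notin> \<Union>?B" by blast
  have "{Y \<in> F. x \<notin> Y} = ?B"
    using x X F(2) unfolding chain_subset_def by blast
  then show thesis using that x(1) by blast
qed

locale surjective_staircase =
  fixes n k m :: nat and r c :: "nat \<Rightarrow> nat"
  assumes r: "r \<in> surjections {0..<n} {0..<m}" and c: "c \<in> surjections {0..<k} {0..<m}"
begin

abbreviation "M \<equiv> staircase n k r c"

lemma r_less: "i < n \<Longrightarrow> r i < m"
  using r by (auto simp: surjections_def)

lemma c_less: "j < k \<Longrightarrow> c j < m"
  using c by (auto simp: surjections_def)

lemma r_hits:
  assumes "l < m" shows "\<exists>i<n. r i = l"
proof -
  have "l \<in> r ` {0..<n}" using r assms by (simp add: surjections_def)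
  then show ?thesis by auto
qed

lemma c_hits:
  assumes "l < m" shows "\<exists>j<k. c j = l"
proof -
  have "l \<in> c ` {0..<k}" using c assms by (simp add: surjections_def)
  then show ?thesis by auto
qed

lemma rows_nonzero:
  assumes "i < n" shows "\<exists>j<k. M i j \<noteq> 0"
proof -
  obtain j where "j < k" "c j = 0" using c_hits r_less[OF assms] by blast
  then show ?thesis using assms by (auto simp: staircase_apply)
qed

lemma cols_nonzero:
  assumes "j < k" shows "\<exists>i<n. M i j \<noteq> 0"
proof -
  obtain i where "i < n" "r i = c j" using r_hits c_less[OF assms] by blast
  then show ?thesis using assms by (auto simp: staircase_apply)
qed

text \<open>Row min(c j, c j') separates columns of different levels; column max(r i, r i')
  separates rows of different levels.\<close>
lemma same_col_type_iff:
  assumes j: "j < k" "j' < k"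
  shows "same_col_type n M j j' \<longleftrightarrow> c j = c j'"
proof
  have "min (c j) (c j') < m" using c_less[OF j(1)] by simp
  then obtain i where i: "i < n" "r i = min (c j) (c j')" using r_hits by blast
  assume "same_col_type n M j j'"
  then have "M i j = M i j'" using i(1) by (simp add: same_col_type_def)
  then have "c j \<le> r i \<longleftrightarrow> c j' \<le> r i" using i(1) j by (simp add: staircase_apply split: if_splits)
  then show "c j = c j'" using i(2) by (simp add: min_def split: if_splits)
qed (use j in \<open>simp add: same_col_type_def staircase_apply\<close>)

lemma same_row_type_iff:
  assumes i: "i < n" "i' < n"
  shows "same_row_type k M i i' \<longleftrightarrow> r i = r i'"
proof
  have "max (r i) (r i') < m" using r_less[OF i(1)] r_less[OF i(2)] by simp
  then obtain j where j: "j < k" "c j = max (r i) (r i')" using c_hits by blast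
  assume "same_row_type k M i i'"
  then have "M i j = M i' j" using j(1) by (simp add: same_row_type_def)
  then have "c j \<le> r i \<longleftrightarrow> c j \<le> r i'" using i j(1) by (simp add: staircase_apply split: if_splits)
  then show "r i = r i'" using j(2) by (simp add: max_def split: if_splits)
qed (use i in \<open>simp add: same_row_type_def staircase_apply\<close>)

lemma staircase_in_L_le_iff:
  "M \<in> L_le d n k \<longleftrightarrow>
    r \<in> bounded_surjections d {0..<n} {0..<m} \<and> c \<in> bounded_surjections d {0..<k} {0..<m}"
proof -
  have col_class: "{j'. j' < k \<and> same_col_type n M j j'} = {j' \<in> {0..<k}. c j' = c j}" if "j < k" for j
    using same_col_type_iff[OF that] by auto
  have row_class: "{i'. i' < n \<and> same_row_type k M i i'} = {i' \<in> {0..<n}. r i' = r i}" if "i < n" for i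
    using same_row_type_iff[OF that] by auto
  have "(\<forall>j<k. card {j'. j' < k \<and> same_col_type n M j j'} \<le> d)
      \<longleftrightarrow> (\<forall>l\<in>c ` {0..<k}. card {j \<in> {0..<k}. c j = l} \<le> d)"
    by (auto simp: col_class)
  also have "\<dots> \<longleftrightarrow> (\<forall>l\<in>{0..<m}. card {j \<in> {0..<k}. c j = l} \<le> d)"
    using c by (simp only: surjections_def mem_Collect_eq)
  finally have cols: "(\<forall>j<k. card {j'. j' < k \<and> same_col_type n M j j'} \<le> d)
      \<longleftrightarrow> (\<forall>l\<in>{0..<m}. card {j \<in> {0..<k}. c j = l} \<le> d)" .
  have "(\<forall>i<n. card {i'. i' < n \<and> same_row_type k M i i'} \<le> d)
      \<longleftrightarrow> (\<forall>l\<in>r ` {0..<n}. card {i \<in> {0..<n}. r i = l} \<le> d)"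
    by (auto simp: row_class)
  also have "\<dots> \<longleftrightarrow> (\<forall>l\<in>{0..<m}. card {i \<in> {0..<n}. r i = l} \<le> d)"
    using r by (simp only: surjections_def mem_Collect_eq)
  finally have rows: "(\<forall>i<n. card {i'. i' < n \<and> same_row_type k M i i'} \<le> d)
      \<longleftrightarrow> (\<forall>l\<in>{0..<m}. card {i \<in> {0..<n}. r i = l} \<le> d)" .
  show ?thesis
    using cols rows r c staircase_in_zo_matrices lonesum_staircase rows_nonzero cols_nonzero
    by (simp add: L_le_def bounded_surjections_def surjections_def) blast
qed

end

definition row_support :: "nat \<Rightarrow> (nat \<Rightarrow> nat \<Rightarrow> nat) \<Rightarrow> nat \<Rightarrow> nat set" where
  "row_support k M i = {j. j < k \<and> M i j \<noteq> 0}"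

definition row_supports :: "nat \<Rightarrow> nat \<Rightarrow> (nat \<Rightarrow> nat \<Rightarrow> nat) \<Rightarrow> nat set set" where
  "row_supports n k M = row_support k M ` {0..<n}"

definition staircase_params ::
    "nat \<Rightarrow> nat \<Rightarrow> (nat \<Rightarrow> nat \<Rightarrow> nat) \<Rightarrow> nat \<times> (nat \<Rightarrow> nat) \<times> (nat \<Rightarrow> nat)" where
  "staircase_params n k M =
    (card (row_supports n k M),
     \<lambda>i\<in>{0..<n}. chain_rank (row_supports n k M) (row_support k M i),
     \<lambda>j\<in>{0..<k}. card {Y \<in> row_supports n k M. j \<notin> Y})"

context surjective_staircase
begin

definition columns_upto :: "nat \<Rightarrow> nat set" where
  "columns_upto l = {j. j < k \<and> c j \<le> l}"

lemma row_support_staircase: "i < n \<Longrightarrow> row_support k M i = columns_upto (r i)"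
  by (auto simp: row_support_def columns_upto_def staircase_apply split: if_splits)

lemma row_supports_staircase: "row_supports n k M = columns_upto ` {0..<m}"
proof -
  have "row_supports n k M = columns_upto ` r ` {0..<n}"
    by (auto simp: row_supports_def row_support_staircase image_image)
  then show ?thesis using r by (simp add: surjections_def)
qed

lemma columns_upto_mono: "l \<le> l' \<Longrightarrow> columns_upto l \<subseteq> columns_upto l'"
  by (auto simp: columns_upto_def)

lemma columns_upto_strict_mono:
  assumes "l < l'" "l' < m" shows "columns_upto l \<subset> columns_upto l'"
proof -
  obtain j where "j < k" "c j = l'" using c_hits[OF assms(2)] by blast
  then have "j \<in> columns_upto l' - columns_upto l" using assms(1) by (simp add: columns_upto_def)
  then show ?thesis using columns_upto_mono[of l l'] assms(1) by auto
qed

lemma columns_upto_less_iff: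
  assumes "l < m" "l' < m" shows "columns_upto l \<subset> columns_upto l' \<longleftrightarrow> l < l'"
  using columns_upto_strict_mono columns_upto_mono assms by (metis leI less_le_not_le)

lemma inj_on_columns_upto: "inj_on columns_upto {0..<m}"
  by (rule inj_onI) (metis atLeastLessThan_iff columns_upto_less_iff linorder_neqE_nat psubset_eq)

lemma card_columns_upto_below: "l \<le> m \<Longrightarrow> card (columns_upto ` {0..<l}) = l"
  using inj_on_subset[OF inj_on_columns_upto] by (simp add: card_image)

lemma columns_upto_below:
  assumes "l < m"
  shows "{Y \<in> columns_upto ` {0..<m}. Y \<subset> columns_upto l} = columns_upto ` {0..<l}"
proof -
  have "{Y \<in> columns_upto ` {0..<m}. Y \<subset> columns_upto l}
      = columns_upto ` {l' \<in> {0..<m}. columns_upto l' \<subset> columns_upto l}" by auto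
  also have "{l' \<in> {0..<m}. columns_upto l' \<subset> columns_upto l} = {0..<l}"
  proof (rule set_eqI)
    fix l' show "l' \<in> {l' \<in> {0..<m}. columns_upto l' \<subset> columns_upto l} \<longleftrightarrow> l' \<in> {0..<l}"
      using assms by (cases "l' < m") (simp_all add: columns_upto_less_iff)
  qed
  finally show ?thesis .
qed

lemma columns_upto_missing:
  assumes "j < k"
  shows "{Y \<in> columns_upto ` {0..<m}. j \<notin> Y} = columns_upto ` {0..<c j}"
proof -
  have "{Y \<in> columns_upto ` {0..<m}. j \<notin> Y} = columns_upto ` {l \<in> {0..<m}. j \<notin> columns_upto l}"
    by auto
  also have "{l \<in> {0..<m}. j \<notin> columns_upto l} = {0..<c j}"
    using assms c_less[OF assms] by (auto simp: columns_upto_def)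
  finally show ?thesis .
qed

lemma staircase_params_staircase: "staircase_params n k M = (m, r, c)"
proof -
  have rank: "chain_rank (row_supports n k M) (row_support k M i) = r i" if i: "i < n" for i
    using r_less[OF i] card_columns_upto_below
    by (simp add: chain_rank_def row_supports_staircase row_support_staircase[OF i] columns_upto_below)
  have level: "card {Y \<in> row_supports n k M. j \<notin> Y} = c j" if j: "j < k" for j
    using c_less[OF j] card_columns_upto_below
    by (simp add: row_supports_staircase columns_upto_missing[OF j])
  have "(\<lambda>i\<in>{0..<n}. chain_rank (row_supports n k M) (row_support k M i)) = r"
    using rank r by (auto simp: surjections_def PiE_def extensional_def)
  moreover have "(\<lambda>j\<in>{0..<k}. card {Y \<in> row_supports n k M. j \<notin> Y}) = c"
    using level c by (auto simp: surjections_def PiE_def extensional_def)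
  moreover have "card (row_supports n k M) = m"
    using card_columns_upto_below[of m] by (simp add: row_supports_staircase)
  ultimately show ?thesis by (simp add: staircase_params_def)
qed

end

section \<open>Every nonzero lonesum matrix is a staircase\<close>

lemma sum_cong_two_points:
  fixes f g :: "'a \<Rightarrow> 'b::comm_monoid_add"
  assumes "finite A" "a \<in> A" "b \<in> A" "a \<noteq> b"
    and "\<And>x. x \<in> A \<Longrightarrow> x \<noteq> a \<Longrightarrow> x \<noteq> b \<Longrightarrow> f x = g x"
    and "f a + f b = g a + g b"
  shows "sum f A = sum g A"
proof -
  have b: "b \<in> A - {a}" using assms(3,4) by simp
  have split: "sum h A = h a + (h b + sum h (A - {a} - {b}))" for h :: "'a \<Rightarrow> 'b"
    using sum.remove[OF assms(1,2), of h] sum.remove[OF _ b, of h] assms(1) by simp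
  have "sum f (A - {a} - {b}) = sum g (A - {a} - {b})"
    using assms(5) by (intro sum.cong) auto
  then show ?thesis
    using assms(6) split[of f] split[of g] by (simp add: add.assoc[symmetric])
qed

text \<open>Switching the four entries of an interchange changes no line sum.\<close>
lemma lonesum_no_interchange:
  assumes M: "M \<in> zo_matrices n k" "lonesum n k M"
    and ij: "i < n" "i' < n" "j < k" "j' < k"
    and ones: "M i j = 1" "M i' j' = 1" and zeros: "M i j' = 0" "M i' j = 0"
  shows False
proof -
  have "i \<noteq> i'" "j \<noteq> j'" using ones zeros by auto
  define N where "N = (\<lambda>a\<in>{0..<n}. \<lambda>b\<in>{0..<k}.
      if a \<in> {i, i'} \<and> b \<in> {j, j'} then 1 - M a b else M a b)"
  have N_apply: "N a b = (if a \<in> {i, i'} \<and> b \<in> {j, j'} then 1 - M a b else M a b)"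
    if "a < n" "b < k" for a b using that by (simp add: N_def)
  have "N \<in> zo_matrices n k"
    using zo_matrices_entry[OF M(1)] by (auto simp: N_def zo_matrices_def PiE_iff)
  moreover have "row_sums k N a = row_sums k M a" if a: "a < n" for a
  proof (cases "a \<in> {i, i'}")
    case True
    show ?thesis unfolding row_sums_def
      by (rule sum_cong_two_points[of _ j j'])
        (use a ij True ones zeros \<open>j \<noteq> j'\<close> in \<open>auto simp: N_apply\<close>)
  qed (use a in \<open>simp add: row_sums_def N_apply\<close>)
  moreover have "col_sums n N b = col_sums n M b" if b: "b < k" for b
  proof (cases "b \<in> {j, j'}")
    case True
    show ?thesis unfolding col_sums_def
      by (rule sum_cong_two_points[of _ i i'])
        (use b ij True ones zeros \<open>i \<noteq> i'\<close> in \<open>auto simp: N_apply\<close>)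
  qed (use b in \<open>simp add: col_sums_def N_apply\<close>)
  ultimately have "N = M" using M(2) by (simp add: lonesum_def)
  moreover have "N i j = 0" using ij ones by (simp add: N_apply)
  ultimately show False using ones by simp
qed

lemma lonesum_row_supports_chain:
  assumes "M \<in> zo_matrices n k" "lonesum n k M"
  shows "chain\<^sub>\<subseteq> (row_supports n k M)"
  unfolding chain_subset_def row_supports_def
proof (intro ballI)
  fix X Y assume "X \<in> row_support k M ` {0..<n}" "Y \<in> row_support k M ` {0..<n}"
  then obtain i i' where i: "i < n" "i' < n" and XY: "X = row_support k M i" "Y = row_support k M i'"
    by auto
  show "X \<subseteq> Y \<or> Y \<subseteq> X"
  proof (rule disjCI)
    assume "\<not> Y \<subseteq> X"
    then obtain j' where j': "j' < k" "M i' j' \<noteq> 0" "M i j' = 0"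
      by (auto simp: XY row_support_def)
    show "X \<subseteq> Y"
    proof
      fix j assume "j \<in> X"
      then have j: "j < k" "M i j \<noteq> 0" by (auto simp: XY row_support_def)
      have "M i j = 1" "M i' j' = 1"
        using zo_matrices_entry[OF assms(1) i(1) j(1)] zo_matrices_entry[OF assms(1) i(2) j'(1)] j j'
        by auto
      then have "M i' j \<noteq> 0"
        using lonesum_no_interchange[OF assms i j(1) j'(1)] j'(3) by blast
      then show "j \<in> Y" using j by (simp add: XY row_support_def)
    qed
  qed
qed

locale nonzero_lonesum =
  fixes n k :: nat and M :: "nat \<Rightarrow> nat \<Rightarrow> nat"
  assumes zo: "M \<in> zo_matrices n k" and lonesum: "lonesum n k M"
    and rows_nonzero: "\<And>i. i < n \<Longrightarrow> \<exists>j<k. M i j \<noteq> 0"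
    and cols_nonzero: "\<And>j. j < k \<Longrightarrow> \<exists>i<n. M i j \<noteq> 0"
begin

abbreviation "F \<equiv> row_supports n k M"

definition row_level :: "nat \<Rightarrow> nat" where
  "row_level = (\<lambda>i\<in>{0..<n}. chain_rank F (row_support k M i))"

definition col_level :: "nat \<Rightarrow> nat" where
  "col_level = (\<lambda>j\<in>{0..<k}. card {Y \<in> F. j \<notin> Y})"

lemma staircase_params_eq: "staircase_params n k M = (card F, row_level, col_level)"
  by (simp add: staircase_params_def row_level_def col_level_def)

lemma finite_F: "finite F"
  by (simp add: row_supports_def)

lemma chain_F: "chain\<^sub>\<subseteq> F"
  using lonesum_row_supports_chain[OF zo lonesum] .

lemma row_support_in_F: "i < n \<Longrightarrow> row_support k M i \<in> F"
  by (simp add: row_supports_def)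

lemma F_members_nonempty: "X \<in> F \<Longrightarrow> X \<noteq> {}"
  using rows_nonzero by (fastforce simp: row_supports_def row_support_def)

lemma row_level_surjection: "row_level \<in> surjections {0..<n} {0..<card F}"
proof -
  have "row_level ` {0..<n} = chain_rank F ` F"
    by (auto simp: row_level_def row_supports_def image_image)
  also have "\<dots> = {0..<card F}"
    using bij_betw_chain_rank[OF finite_F chain_F] by (simp add: bij_betw_def)
  finally show ?thesis
    by (auto simp: surjections_def row_level_def)
qed

lemma col_level_surjection: "col_level \<in> surjections {0..<k} {0..<card F}"
proof -
  have "col_level j < card F" if j: "j < k" for j
  proof -
    obtain i where "i < n" "M i j \<noteq> 0" using cols_nonzero[OF j] by blast
    then have "row_support k M i \<in> F - {Y \<in> F. j \<notin> Y}"
      using j row_support_in_F by (simp add: row_support_def)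
    then have "{Y \<in> F. j \<notin> Y} \<subset> F" by blast
    then show ?thesis using j finite_F by (simp add: col_level_def psubset_card_mono)
  qed
  moreover have "l \<in> col_level ` {0..<k}" if l: "l < card F" for l
  proof -
    have "l \<in> chain_rank F ` F"
      using bij_betw_chain_rank[OF finite_F chain_F] l by (simp add: bij_betw_def)
    then obtain X where X: "X \<in> F" "chain_rank F X = l" by blast
    obtain j where j: "j \<in> X" "{Y \<in> F. j \<notin> Y} = {Y \<in> F. Y \<subset> X}"
      using chain_new_point[OF finite_F chain_F X(1) F_members_nonempty[OF X(1)]] by blast
    have "j < k" using j(1) X(1) by (auto simp: row_supports_def row_support_def)
    then have "col_level j = l" using j(2) X(2) by (simp add: col_level_def chain_rank_def)
    then show ?thesis using \<open>j < k\<close> by force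
  qed
  ultimately show ?thesis
    by (auto simp: surjections_def col_level_def)
qed

text \<open>Column j lies in the support of row i iff every row support missing j lies
  strictly below that of row i.\<close>
lemma staircase_levels: "M = staircase n k row_level col_level"
proof (rule zo_matrices_eqI[OF zo staircase_in_zo_matrices])
  fix i j assume i: "i < n" and j: "j < k"
  let ?X = "row_support k M i"
  have X: "?X \<in> F" using row_support_in_F[OF i] .
  show "M i j = staircase n k row_level col_level i j"
  proof (cases "j \<in> ?X")
    case True
    then have "{Y \<in> F. j \<notin> Y} \<subseteq> {Y \<in> F. Y \<subset> ?X}"
      using chain_F X unfolding chain_subset_def by blast
    then have "col_level j \<le> row_level i"
      using i j finite_F by (simp add: row_level_def col_level_def chain_rank_def card_mono)
    moreover have "M i j = 1" using True zo_matrices_entry[OF zo i j] by (auto simp: row_support_def)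
    ultimately show ?thesis using i j by (simp add: staircase_apply)
  next
    case False
    then have "{Y \<in> F. Y \<subset> ?X} \<subset> {Y \<in> F. j \<notin> Y}"
      using X by blast
    then have "row_level i < col_level j"
      using i j finite_F by (simp add: row_level_def col_level_def chain_rank_def psubset_card_mono)
    moreover have "M i j = 0" using False j by (simp add: row_support_def)
    ultimately show ?thesis using i j by (simp add: staircase_apply)
  qed
qed

end

lemma surjective_staircase_if_bounded:
  "r \<in> bounded_surjections d {0..<n} {0..<m} \<Longrightarrow> c \<in> bounded_surjections d {0..<k} {0..<m}
    \<Longrightarrow> surjective_staircase n k m r c"
  by unfold_locales (simp_all add: bounded_surjections_def)

lemma nonzero_lonesum_if_L_le: "M \<in> L_le d n k \<Longrightarrow> nonzero_lonesum n k M"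
  by (simp add: L_le_def nonzero_lonesum_def)

lemma bij_betw_staircase_L_le:
  "bij_betw (\<lambda>(m, r, c). staircase n k r c)
    (SIGMA m:{0..min n k}.
      bounded_surjections d {0..<n} {0..<m} \<times> bounded_surjections d {0..<k} {0..<m})
    (L_le d n k)"
  (is "bij_betw ?staircase ?Params _")
proof (rule bij_betw_byWitness[where f' = "staircase_params n k"])
  show "\<forall>p\<in>?Params. staircase_params n k (?staircase p) = p"
  proof clarify
    fix m :: nat and r c
    assume "r \<in> bounded_surjections d {0..<n} {0..<m}" "c \<in> bounded_surjections d {0..<k} {0..<m}"
    then interpret surjective_staircase n k m r c by (rule surjective_staircase_if_bounded)
    show "staircase_params n k M = (m, r, c)" by (rule staircase_params_staircase)
  qed
  show "\<forall>M\<in>L_le d n k. ?staircase (staircase_params n k M) = M"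
  proof
    fix M assume "M \<in> L_le d n k"
    then interpret nonzero_lonesum n k M by (rule nonzero_lonesum_if_L_le)
    show "?staircase (staircase_params n k M) = M"
      using staircase_levels by (simp add: staircase_params_eq)
  qed
  show "?staircase ` ?Params \<subseteq> L_le d n k"
  proof clarify
    fix m :: nat and r c
    assume rc: "r \<in> bounded_surjections d {0..<n} {0..<m}" "c \<in> bounded_surjections d {0..<k} {0..<m}"
    then interpret surjective_staircase n k m r c by (rule surjective_staircase_if_bounded)
    show "M \<in> L_le d n k" using rc staircase_in_L_le_iff by blast
  qed
  show "staircase_params n k ` L_le d n k \<subseteq> ?Params"
  proof (rule image_subsetI)
    fix M assume L: "M \<in> L_le d n k"
    interpret nonzero_lonesum n k M using nonzero_lonesum_if_L_le[OF L] .
    interpret levels: surjective_staircase n k "card F" row_level col_level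
      using row_level_surjection col_level_surjection by unfold_locales
    have "card F \<le> n" "card F \<le> k"
      using card_le_if_surjection[OF row_level_surjection] card_le_if_surjection[OF col_level_surjection]
      by simp_all
    moreover have "row_level \<in> bounded_surjections d {0..<n} {0..<card F}"
      "col_level \<in> bounded_surjections d {0..<k} {0..<card F}"
      using L levels.staircase_in_L_le_iff staircase_levels by simp_all
    ultimately show "staircase_params n k M \<in> ?Params" by (simp add: staircase_params_eq)
  qed
qed

theorem theorem2:
  fixes d n k :: nat
  assumes "d \<ge> 1"
  shows "card (L_le d n k) =
    (\<Sum>m = 0..min n k. fact m * stirling_le d n m * (fact m * stirling_le d k m))"
proof -
  let ?Surj = "\<lambda>A m. bounded_surjections d A {0..<m}"
  have "card (L_le d n k) = card (SIGMA m:{0..min n k}. ?Surj {0..<n} m \<times> ?Surj {0..<k} m)"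
    using bij_betw_staircase_L_le by (rule bij_betw_same_card[symmetric])
  also have "\<dots> = (\<Sum>m = 0..min n k. card (?Surj {0..<n} m) * card (?Surj {0..<k} m))"
    by (simp add: card_cartesian_product finite_bounded_surjections)
  also have "\<dots> = (\<Sum>m = 0..min n k. fact m * stirling_le d n m * (fact m * stirling_le d k m))"
    by (simp add: card_bounded_surjections stirling_le_def bounded_partitions_def)
  finally show ?thesis .
qed

end
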